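(* Let $\tau_i$ be an HC task, let $0\le t_I\le t_E\le t$, and suppose $\tau_i$ switches to HC mode at some time $t_i\in[t_I,t_E]$. Then, as a function of $t_i\in[t_I,t_E]$, $\mathrm{dbf}(\tau_i,t,t_i)$ is maximized when $t_i=t_E$ or $t_i=t_I$; that is, $\mathrm{dbf}(\tau_i,t,t_i)\le\max\{\mathrm{dbf}(\tau_i,t,t_I),\mathrm{dbf}(\tau_i,t,t_E)\}$ for all $t_i\in[t_I,t_E]$.
   Context: $\tau_i=(T_i,HC,\{C_i^L,C_i^H\},D_i)$ is a high-criticality sporadic task with minimum inter-release separation $T_i$, relative deadline $D_i\le T_i$, WCETs $C_i^L<C_i^H$, and tightened deadline $D_i^L\le D_i$. For a time interval $[0,t)$ and mode-switch instant $t_i\le t$, the demand of the job $J_i^A$ (the last job released at or before $t_i$, with release time $r=r(J_i^A)$) is $\mathrm{dbf}(J_i^A,t,t_i)=C_i^L$ if $r+D_i^L<t_i$; $=C_i^H$ if $r+D_i^L\ge t_i$ and $r+D_i\le t$; $=\min\{t_i-r,C_i^L\}$ if $t_i\le r+D_i^L\le t$ and $r+D_i>t$; $=0$ if $r+D_i^L>t$. Define $\mathrm{dbf}_{[b]}(\tau_i,t,t_i)=\lfloor t_i/T_i\rfloor C_i^L+\mathrm{dbf}(J_i^A,t,t_i)$ with $r(J_i^A)=\lfloor t_i/T_i\rfloor T_i$; $\mathrm{dbf}_{[c]}(\tau_i,t,t_i)=b_iC_i^L+\mathrm{dbf}(J_i^A,t,t_i)+a_iC_i^H$, where $s=t-D_i-\lfloor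 (t-D_i)/T_i\rfloor T_i$, $b_i=\lfloor (t_i-s)/T_i\rfloor$, $a_i=\lfloor (t-D_i)/T_i\rfloor-b_i$, and $r(J_i^A)=s+b_iT_i$. Then $\mathrm{dbf}(\tau_i,t,t_i)$ is: $\mathrm{dbf}_{[b]}(\tau_i,t,t_i)$ if $t-t_i<D_i-D_i^L$; $\mathrm{dbf}_{[c]}(\tau_i,t,t_i)$ if $t-t_i\ge D_i$; and $\max\{\mathrm{dbf}_{[b]}(\tau_i,t,t_i),\mathrm{dbf}_{[c]}(\tau_i,t,t_i)\}$ if $D_i-D_i^L\le t-t_i<D_i$. *)

theory Defs
  imports Complex_Main
begin

text \<open>Parameters are passed explicitly:
  T (period), CL, CH (WCETs), D (deadline), DL (tightened deadline).\<close>

definition hc_task :: "real \<Rightarrow> real \<Rightarrow> real \<Rightarrow> real \<Rightarrow> real \<Rightarrow> bool" where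
  "hc_task T CL CH D DL \<longleftrightarrow> 0 < T \<and> 0 < DL \<and> DL \<le> D \<and> D \<le> T \<and> 0 < CL \<and> CL < CH"

text \<open>Demand of job J_i^A with release time r in [0,t) with mode switch at ti.\<close>
definition dbf_job :: "real \<Rightarrow> real \<Rightarrow> real \<Rightarrow> real \<Rightarrow> real \<Rightarrow> real \<Rightarrow> real \<Rightarrow> real" where
  "dbf_job CL CH D DL r t ti =
     (if r + DL < ti then CL
      else if r + D \<le> t then CH
      else if r + DL \<le> t then min (ti - r) CL
      else 0)"

definition dbf_b :: "real \<Rightarrow> real \<Rightarrow> real \<Rightarrow> real \<Rightarrow> real \<Rightarrow> real \<Rightarrow> real \<Rightarrow> real" where
  "dbf_b T CL CH D DL t ti =
     of_int \<lfloor>ti / T\<rfloor> * CL + dbf_job CL CH D DL (of_int \<lfloor>ti / T\<rfloor> * T) t ti"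

definition dbf_c :: "real \<Rightarrow> real \<Rightarrow> real \<Rightarrow> real \<Rightarrow> real \<Rightarrow> real \<Rightarrow> real \<Rightarrow> real" where
  "dbf_c T CL CH D DL t ti =
     (let s = t - D - of_int \<lfloor>(t - D) / T\<rfloor> * T;
          b = \<lfloor>(ti - s) / T\<rfloor>;
          a = \<lfloor>(t - D) / T\<rfloor> - b
      in of_int b * CL + dbf_job CL CH D DL (s + of_int b * T) t ti + of_int a * CH)"

definition dbf :: "real \<Rightarrow> real \<Rightarrow> real \<Rightarrow> real \<Rightarrow> real \<Rightarrow> real \<Rightarrow> real \<Rightarrow> real" where
  "dbf T CL CH D DL t ti =
     (if t - ti < D - DL then dbf_b T CL CH D DL t ti
      else if D \<le> t - ti then dbf_c T CL CH D DL t ti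
      else max (dbf_b T CL CH D DL t ti) (dbf_c T CL CH D DL t ti))"

end

theory Submission
  imports Defs
begin

text \<open>Let n = \<lfloor>(t - D_i) / T_i\<rfloor>. Setting C_i^H := 0 in dbf_[b] leaves a part that is
  nondecreasing in t_i; dbf_[b] equals it when t - t_i < D_i - D_i^L and is at most its maximum
  with the plateau value n C_i^L + C_i^H, which dbf_[c] takes for D_i - D_i^L \<le> t - t_i \<le> D_i.
  When t - t_i \<ge> D_i, dbf = dbf_[c] is nonincreasing in t_i, since a later switch only turns
  C_i^H charges into C_i^L charges; so t_I dominates, and the plateau value bounds dbf from below
  wherever t - t_i \<ge> D_i - D_i^L. When t - t_i < D_i, the monotone part is dominated by dbf at t_E
  and the plateau value, relevant only if t - t_i \<ge> D_i - D_i^L, by dbf at t_I.\<close>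

lemma floor_divide_eq_iff:
  fixes x T :: real
  assumes "0 < T"
  shows "\<lfloor>x / T\<rfloor> = k \<longleftrightarrow> of_int k * T \<le> x \<and> x < of_int k * T + T"
  using assms by (simp add: floor_eq_iff le_divide_eq divide_less_eq algebra_simps)

lemma dbf_b_zero_CH_mono:
  assumes "0 < T" "0 \<le> CL" "x \<le> y"
  shows "dbf_b T CL 0 D DL t x \<le> dbf_b T CL 0 D DL t y"
proof -
  define k where "k = \<lfloor>x / T\<rfloor>"
  define l where "l = \<lfloor>y / T\<rfloor>"
  have "k \<le> l"
    unfolding k_def l_def using assms by (intro floor_mono divide_right_mono) auto
  have lower: "of_int k * T \<le> x" "of_int l * T \<le> y"
    using floor_divide_lower[OF \<open>0 < T\<close>] unfolding k_def l_def by auto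
  have job_bounds: "0 \<le> dbf_job CL 0 D DL r t z" "dbf_job CL 0 D DL r t z \<le> CL" if "r \<le> z" for r z
    using that \<open>0 \<le> CL\<close> unfolding dbf_job_def by auto
  show ?thesis
  proof (cases "k = l")
    case True
    then show ?thesis
      using \<open>x \<le> y\<close> \<open>0 \<le> CL\<close> lower unfolding dbf_b_def dbf_job_def k_def l_def by (auto simp: min_def)
  next
    case False
    with \<open>k \<le> l\<close> have "of_int k + 1 \<le> (of_int l :: real)"
      by linarith
    then have "(of_int k + 1) * CL \<le> of_int l * CL"
      using \<open>0 \<le> CL\<close> by (rule mult_right_mono)
    then show ?thesis
      using job_bounds[OF lower(1)] job_bounds[OF lower(2)]
      unfolding dbf_b_def k_def[symmetric] l_def[symmetric] by (simp add: algebra_simps)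
  qed
qed

lemma dbf_b_zero_CH_le:
  assumes "0 \<le> CH"
  shows "dbf_b T CL 0 D DL t x \<le> dbf_b T CL CH D DL t x"
  using assms unfolding dbf_b_def dbf_job_def by auto

lemma dbf_b_eq_zero_CH:
  assumes "0 < T" "t - x < D - DL"
  shows "dbf_b T CL CH D DL t x = dbf_b T CL 0 D DL t x"
  using assms floor_divide_lower[OF \<open>0 < T\<close>, of x] unfolding dbf_b_def dbf_job_def by auto

lemma dbf_b_le_max_plateau:
  assumes "0 < T" "0 \<le> CL"
  shows "dbf_b T CL CH D DL t x \<le> max (dbf_b T CL 0 D DL t x) (of_int \<lfloor>(t - D) / T\<rfloor> * CL + CH)"
proof -
  define k where "k = \<lfloor>x / T\<rfloor>"
  have "of_int k * CL \<le> of_int \<lfloor>(t - D) / T\<rfloor> * CL" if "of_int k * T + D \<le> t"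
  proof -
    have "k \<le> \<lfloor>(t - D) / T\<rfloor>"
      using that \<open>0 < T\<close> by (simp add: le_floor_iff le_divide_eq)
    then show ?thesis using \<open>0 \<le> CL\<close> by (simp add: mult_right_mono)
  qed
  then show ?thesis unfolding dbf_b_def dbf_job_def k_def[symmetric] by auto
qed

text \<open>With jobs released at s, s + T, s + 2T, ..., this is the number of jobs that dbf_c charges
  C^L when the mode switches at x: every job before J_i^A, and J_i^A itself once its tightened
  deadline has passed.\<close>

definition lo_charged_jobs :: "real \<Rightarrow> real \<Rightarrow> real \<Rightarrow> real \<Rightarrow> int" where
  "lo_charged_jobs T DL s x =
     \<lfloor>(x - s) / T\<rfloor> + (if s + of_int \<lfloor>(x - s) / T\<rfloor> * T + DL < x then 1 else 0)"

lemma lo_charged_jobs_mono: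
  assumes "0 < T" "x \<le> y"
  shows "lo_charged_jobs T DL s x \<le> lo_charged_jobs T DL s y"
proof -
  define k where "k = \<lfloor>(x - s) / T\<rfloor>"
  define l where "l = \<lfloor>(y - s) / T\<rfloor>"
  have "k \<le> l"
    unfolding k_def l_def using assms by (simp add: floor_mono divide_right_mono)
  then show ?thesis
    using \<open>x \<le> y\<close> unfolding lo_charged_jobs_def k_def[symmetric] l_def[symmetric]
    by (cases "k = l") auto
qed

lemma dbf_c_eq_lo_charged_jobs:
  fixes T D t x :: real
  defines "n \<equiv> \<lfloor>(t - D) / T\<rfloor>"
  assumes "0 < T" "D \<le> t - x"
  shows "dbf_c T CL CH D DL t x
    = (of_int n + 1) * CH - (CH - CL) * of_int (lo_charged_jobs T DL (t - D - of_int n * T) x)"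
proof -
  define s where "s = t - D - of_int n * T"
  define b where "b = \<lfloor>(x - s) / T\<rfloor>"
  have "(x - s) / T \<le> of_int n"
    unfolding s_def using assms by (simp add: divide_le_eq)
  then have "b \<le> n"
    unfolding b_def by (metis floor_mono floor_of_int)
  then have "s + of_int b * T + D \<le> t"
    using \<open>0 < T\<close> unfolding s_def by simp
  then have "dbf_job CL CH D DL (s + of_int b * T) t x
      = (if s + of_int b * T + DL < x then CL else CH)"
    unfolding dbf_job_def by auto
  then show ?thesis
    unfolding dbf_c_def lo_charged_jobs_def Let_def n_def[symmetric] s_def[symmetric] b_def[symmetric]
    by (simp add: algebra_simps)
qed

lemma dbf_c_antimono:
  assumes "0 < T" "CL \<le> CH" "x \<le> y" "D \<le> t - y"
  shows "dbf_c T CL CH D DL t y \<le> dbf_c T CL CH D DL t x"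
  using dbf_c_eq_lo_charged_jobs[of T D t x] dbf_c_eq_lo_charged_jobs[of T D t y]
    lo_charged_jobs_mono[OF \<open>0 < T\<close> \<open>x \<le> y\<close>] assms
  by (simp add: mult_left_mono)

lemma dbf_c_eq_plateau:
  assumes "0 < T" "D \<le> T" "x < t" "D - DL \<le> t - x" "t - x \<le> D"
  shows "dbf_c T CL CH D DL t x = of_int \<lfloor>(t - D) / T\<rfloor> * CL + CH"
proof -
  define n where "n = \<lfloor>(t - D) / T\<rfloor>"
  define s where "s = t - D - of_int n * T"
  have last_job: "\<lfloor>(x - s) / T\<rfloor> = n"
    unfolding floor_divide_eq_iff[OF \<open>0 < T\<close>] s_def using assms by auto
  have "s + of_int n * T = t - D"
    unfolding s_def by simp
  then show ?thesis
    using assms unfolding dbf_c_def dbf_job_def Let_def n_def[symmetric] s_def[symmetric] last_job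
    by auto
qed

lemma dbf_eq_dbf_b_zero_CH:
  assumes "hc_task T CL CH D DL" "t - x < D - DL"
  shows "dbf T CL CH D DL t x = dbf_b T CL 0 D DL t x"
  using assms dbf_b_eq_zero_CH[of T t x D DL] unfolding dbf_def hc_task_def by auto

lemma dbf_b_zero_CH_le_dbf:
  assumes "hc_task T CL CH D DL" "t - x < D"
  shows "dbf_b T CL 0 D DL t x \<le> dbf T CL CH D DL t x"
  using assms dbf_b_zero_CH_le[of CH T CL D DL t x] unfolding dbf_def hc_task_def by auto

lemma dbf_le_max_plateau:
  assumes "hc_task T CL CH D DL" "x < t" "t - x < D"
  shows "dbf T CL CH D DL t x \<le> max (dbf_b T CL 0 D DL t x) (of_int \<lfloor>(t - D) / T\<rfloor> * CL + CH)"
  using assms dbf_b_le_max_plateau[of T CL CH D DL t x] dbf_c_eq_plateau[of T D x t DL CL CH]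
  unfolding dbf_def hc_task_def by auto

lemma plateau_le_dbf:
  assumes "hc_task T CL CH D DL" "x < t" "D - DL \<le> t - x"
  shows "of_int \<lfloor>(t - D) / T\<rfloor> * CL + CH \<le> dbf T CL CH D DL t x"
proof (cases "D \<le> t - x")
  case True
  have task: "0 < T" "CL \<le> CH" "0 < DL" "DL \<le> D" "D \<le> T"
    using assms(1) unfolding hc_task_def by auto
  then have "of_int \<lfloor>(t - D) / T\<rfloor> * CL + CH = dbf_c T CL CH D DL t (t - D)"
    using dbf_c_eq_plateau[of T D "t - D" t DL CL CH] by simp
  also have "\<dots> \<le> dbf_c T CL CH D DL t x"
    using task True by (intro dbf_c_antimono) auto
  also have "\<dots> = dbf T CL CH D DL t x"
    using True task unfolding dbf_def by auto
  finally show ?thesis .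
next
  case False
  then show ?thesis
    using assms dbf_c_eq_plateau[of T D x t DL CL CH] unfolding dbf_def hc_task_def by auto
qed

lemma dbf_antimono:
  assumes "hc_task T CL CH D DL" "x \<le> y" "D \<le> t - y"
  shows "dbf T CL CH D DL t y \<le> dbf T CL CH D DL t x"
  using assms dbf_c_antimono[of T CL CH x y D t DL] unfolding dbf_def hc_task_def by auto

theorem lemma5:
  fixes T CL CH D DL t tI tE ti :: real
  assumes "hc_task T CL CH D DL"
    and "0 \<le> tI" and "tI \<le> tE" and "tE \<le> t"
    and "tI \<le> ti" and "ti \<le> tE"
  shows "dbf T CL CH D DL t ti \<le> max (dbf T CL CH D DL t tI) (dbf T CL CH D DL t tE)"
proof (cases "ti = tE")
  case False
  with assms have "ti < tE" "tI < t" "ti < t" by auto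
  have task: "0 < T" "0 < CL" "0 < DL" using assms(1) unfolding hc_task_def by auto
  have lo_part_le_dbf_tE: "dbf_b T CL 0 D DL t ti \<le> dbf T CL CH D DL t tE" if "t - ti < D"
  proof -
    have "dbf_b T CL 0 D DL t ti \<le> dbf_b T CL 0 D DL t tE"
      using task \<open>ti < tE\<close> by (intro dbf_b_zero_CH_mono) auto
    also have "\<dots> \<le> dbf T CL CH D DL t tE"
      using assms(1) that \<open>ti < tE\<close> by (intro dbf_b_zero_CH_le_dbf) auto
    finally show ?thesis .
  qed
  consider "D \<le> t - ti" | "t - ti < D - DL" | "D - DL \<le> t - ti" "t - ti < D"
    by linarith
  then show ?thesis
  proof cases
    case 1
    then show ?thesis using dbf_antimono[OF assms(1) \<open>tI \<le> ti\<close>] by (simp add: max.coboundedI1)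
  next
    case 2
    then have "dbf T CL CH D DL t ti = dbf_b T CL 0 D DL t ti"
      by (rule dbf_eq_dbf_b_zero_CH[OF assms(1)])
    also have "\<dots> \<le> dbf T CL CH D DL t tE"
      using 2 task by (intro lo_part_le_dbf_tE) auto
    finally show ?thesis by (simp add: max.coboundedI2)
  next
    case 3
    then show ?thesis
      using dbf_le_max_plateau[OF assms(1) \<open>ti < t\<close>] lo_part_le_dbf_tE
        plateau_le_dbf[OF assms(1) \<open>tI < t\<close>] \<open>tI \<le> ti\<close> by fastforce
  qed
qed simp

end
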